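(* Let $A=\{a,b,c\}$, $\Lambda=\{ab^ic\mid i\geq 1\}$ and $\mathcal{T}_2=\{((ab^ic)^2,\varepsilon)\mid i\ge 1\}$. If $u\in A^\ast$ is $\mathcal{T}_2$-irreducible and invertible in $\Pi_2=\langle a,b,c\mid (ab^ic)^2=1\ (i\geq 1)\rangle$, then $u\in\Lambda^\ast$.
   Context: A word $u$ is $\mathcal{T}_2$-irreducible if it contains no factor of the form $(ab^ic)^2$ with $i\ge1$. A word is invertible in $\Pi_2$ if it represents a unit of $\Pi_2$. $\Lambda^\ast$ is the set of finite concatenations of words from $\Lambda$. *)

theory Defs
  imports Main
begin

datatype letter = a | b | c

type_synonym word = "letter list"

definition abc :: "nat \<Rightarrow> word" where
  "abc i = [a] @ replicate i b @ [c]"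

definition Lambda :: "word set" where
  "Lambda = {abc i | i. i \<ge> 1}"

definition Lambda_star :: "word set" where
  "Lambda_star = {concat ws | ws. set ws \<subseteq> Lambda}"

definition T2 :: "(word \<times> word) set" where
  "T2 = {(abc i @ abc i, []) | i. i \<ge> 1}"

definition T2_irreducible :: "word \<Rightarrow> bool" where
  "T2_irreducible u \<longleftrightarrow> \<not> (\<exists>x y i. i \<ge> 1 \<and> u = x @ (abc i @ abc i) @ y)"

definition T2_step :: "(word \<times> word) set" where
  "T2_step = {(x @ l @ y, x @ r @ y) | x y l r. (l, r) \<in> T2}"

definition Pi2_cong :: "(word \<times> word) set" where
  "Pi2_cong = (T2_step \<union> T2_step\<inverse>)\<^sup>*"

definition Pi2_invertible :: "word \<Rightarrow> bool" where
  "Pi2_invertible u \<longleftrightarrow> (\<exists>v. (u @ v, []) \<in> Pi2_cong \<and> (v @ u, []) \<in> Pi2_cong)"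

end

theory Submission
  imports Defs
begin

text \<open>The rules \<open>(ab\<^sup>ic)\<^sup>2 \<rightarrow> \<epsilon>\<close> have no overlaps, so reading a word letter by letter onto a
  stack and cancelling a square whenever the stack ends in one yields a normal form that is
  invariant under the Thue congruence and fixes irreducible words. If \<open>u\<close> is irreducible and
  \<open>uv \<equiv> vu \<equiv> 1\<close>, then \<open>uv \<equiv> 1\<close> forces \<open>u\<close> to begin with \<open>a\<close>, and reducing \<open>vu\<close> to the empty
  word must at some point cancel a square straddling the normal form of \<open>v\<close> and a prefix \<open>u\<^sub>1\<close>
  of \<open>u\<close>. Since \<open>u\<^sub>1\<close> starts with \<open>a\<close> and contains no square, \<open>u\<^sub>1 = ab\<^sup>ic\<close>; the rest of \<open>u\<close> is
  again irreducible and invertible, and induction on the length finishes the proof.\<close>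

lemma replicate_b_Cons_a_eq:
  "replicate i b @ a # x = replicate j b @ a # y \<Longrightarrow> i = j \<and> x = y"
proof (induction i arbitrary: j)
  case 0 then show ?case by (cases j) auto
next
  case (Suc i) then show ?case by (cases j) auto
qed

lemma append_abc_eq: "x @ abc i = y @ abc j \<Longrightarrow> i = j \<and> x = y"
proof -
  assume "x @ abc i = y @ abc j"
  then have "rev (x @ abc i) = rev (y @ abc j)" by simp
  then have "replicate i b @ a # rev x = replicate j b @ a # rev y"
    by (simp add: abc_def)
  then show ?thesis using replicate_b_Cons_a_eq by blast
qed

lemma append_abc_abc_eq: "x @ abc i @ abc i = y @ abc j @ abc j \<Longrightarrow> i = j \<and> x = y"
  using append_abc_eq[of "x @ abc i" i "y @ abc j" j] append_abc_eq[of x i y j] by simp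

lemma a_notin_tl_abc: "a \<notin> set (tl (abc i))"
  by (simp add: abc_def)

lemma hd_proper_suffix_abc: "x @ y = abc i \<Longrightarrow> x \<noteq> [] \<Longrightarrow> y \<noteq> [] \<Longrightarrow> hd y \<noteq> a"
proof -
  assume "x @ y = abc i" "x \<noteq> []" "y \<noteq> []"
  then have "tl (abc i) = tl x @ y" by (metis tl_append2)
  then have "set y \<subseteq> set (tl (abc i))" by simp
  then show "hd y \<noteq> a" using \<open>y \<noteq> []\<close> a_notin_tl_abc[of i] by (metis hd_in_set subsetD)
qed

lemma suffix_abc_abc_hd_a:
  assumes "x @ y = abc i @ abc i" and "y \<noteq> []" and "hd y = a"
  shows "y = abc i \<or> y = abc i @ abc i"
proof -
  obtain z where "x = abc i @ z \<and> z @ y = abc i \<or> x @ z = abc i \<and> y = z @ abc i"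
    using assms(1) by (auto simp: append_eq_append_conv2)
  then show ?thesis
  proof
    assume "x = abc i @ z \<and> z @ y = abc i"
    then show ?thesis using hd_proper_suffix_abc[of z y i] assms(2,3) by (cases "z = []") auto
  next
    assume xz: "x @ z = abc i \<and> y = z @ abc i"
    then have "z = [] \<or> x = []" using hd_proper_suffix_abc[of x z i] assms(3) by (cases "z = []") auto
    then show ?thesis using xz by auto
  qed
qed

lemma T2_irreducible_Nil: "T2_irreducible []"
  unfolding T2_irreducible_def by (simp add: abc_def)

lemma T2_irreducible_infix: "T2_irreducible (x @ u @ y) \<Longrightarrow> T2_irreducible u"
  unfolding T2_irreducible_def by (metis append_assoc)

lemma Lambda_star_Nil: "[] \<in> Lambda_star"
  unfolding Lambda_star_def by (auto intro!: exI[of _ "[]"])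

lemma abc_append_Lambda_star: "1 \<le> i \<Longrightarrow> u \<in> Lambda_star \<Longrightarrow> abc i @ u \<in> Lambda_star"
proof -
  assume "1 \<le> i" "u \<in> Lambda_star"
  then obtain ws where "u = concat ws" "set ws \<subseteq> Lambda" "abc i \<in> Lambda"
    unfolding Lambda_star_def Lambda_def by blast
  then have "abc i @ u = concat (abc i # ws) \<and> set (abc i # ws) \<subseteq> Lambda" by simp
  then show ?thesis unfolding Lambda_star_def by blast
qed

definition ends_in_square :: "word \<Rightarrow> word \<Rightarrow> bool" where
  "ends_in_square w p \<longleftrightarrow> (\<exists>i. 1 \<le> i \<and> w = p @ abc i @ abc i)"

definition push :: "word \<Rightarrow> letter \<Rightarrow> word" where
  "push s x = (if \<exists>p. ends_in_square (s @ [x]) p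
     then THE p. ends_in_square (s @ [x]) p else s @ [x])"

definition reduce :: "word \<Rightarrow> word \<Rightarrow> word" where
  "reduce s w = foldl push s w"

definition nf :: "word \<Rightarrow> word" where
  "nf w = reduce [] w"

lemma ends_in_square_unique: "ends_in_square w p \<Longrightarrow> ends_in_square w q \<Longrightarrow> p = q"
  unfolding ends_in_square_def using append_abc_abc_eq by metis

lemma push_square: "ends_in_square (s @ [x]) p \<Longrightarrow> push s x = p"
  unfolding push_def using ends_in_square_unique by (auto intro: the_equality)

lemma push_no_square: "\<nexists>p. ends_in_square (s @ [x]) p \<Longrightarrow> push s x = s @ [x]"
  unfolding push_def by metis

lemma push_cases:
  obtains (append) "push s x = s @ [x]" "\<nexists>p. ends_in_square (s @ [x]) p"
        | (cancel) p where "ends_in_square (s @ [x]) p" "push s x = p"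
  using push_square push_no_square by blast

lemma push_not_c: "x \<noteq> c \<Longrightarrow> push s x = s @ [x]"
  by (rule push_no_square) (auto simp: ends_in_square_def abc_def dest: arg_cong[of _ _ last])

lemma reduce_Nil [simp]: "reduce s [] = s"
  and reduce_Cons [simp]: "reduce s (x # w) = reduce (push s x) w"
  and reduce_append: "reduce s (w @ w') = reduce (reduce s w) w'"
  by (simp_all add: reduce_def)

lemma reduce_no_c: "c \<notin> set w \<Longrightarrow> reduce s w = s @ w"
  by (induction w arbitrary: s) (auto simp: push_not_c)

lemma reduce_abc: "reduce s (abc i) = push (s @ a # replicate i b) c"
proof -
  have "reduce s (abc i) = reduce (reduce s (a # replicate i b)) [c]"
    by (simp only: abc_def append_Cons append_Nil flip: reduce_append)
  also have "reduce s (a # replicate i b) = s @ a # replicate i b"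
    by (rule reduce_no_c) simp
  finally show ?thesis by simp
qed

lemma snoc_c_abc: "(s @ a # replicate i b) @ [c] = s @ abc i"
  by (simp add: abc_def)

lemma ends_in_square_append_abc: "ends_in_square (s @ abc i) p \<longleftrightarrow> 1 \<le> i \<and> s = p @ abc i"
  unfolding ends_in_square_def using append_abc_eq[of s i "p @ abc j" j for j] by auto

lemma reduce_abc_cancel: "1 \<le> i \<Longrightarrow> reduce (q @ abc i) (abc i) = q"
  unfolding reduce_abc by (rule push_square) (simp only: snoc_c_abc ends_in_square_append_abc)

lemma reduce_abc_no_cancel: "\<nexists>q. s = q @ abc i \<Longrightarrow> reduce s (abc i) = s @ abc i"
  using push_no_square[of "s @ a # replicate i b" c]
  by (simp only: reduce_abc snoc_c_abc ends_in_square_append_abc) blast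

lemma T2_irreducible_push:
  assumes irr: "T2_irreducible s"
  shows "T2_irreducible (push s x)"
proof (cases s x rule: push_cases)
  case append
  show ?thesis unfolding T2_irreducible_def
  proof
    assume "\<exists>y y' i. 1 \<le> i \<and> push s x = y @ (abc i @ abc i) @ y'"
    then obtain y y' i where i: "1 \<le> i" and sx: "s @ [x] = y @ (abc i @ abc i) @ y'"
      using append by auto
    show False
    proof (cases "y' = []")
      case True
      then show False using sx i append(2) by (auto simp: ends_in_square_def)
    next
      case False
      then have "s = y @ (abc i @ abc i) @ butlast y'"
        using sx by (metis append_assoc butlast_append butlast_snoc)
      then show False using irr i unfolding T2_irreducible_def by blast
    qed
  qed
next
  case (cancel p)
  from cancel(1) obtain i where "s @ [x] = p @ abc i @ abc i"
    unfolding ends_in_square_def by blast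
  then have "s = p @ butlast (abc i @ abc i)"
    by (metis butlast_append butlast_snoc abc_def append_is_Nil_conv not_Cons_self2)
  then show ?thesis using irr T2_irreducible_infix[of "[]" p] cancel(2) by simp
qed

lemma T2_irreducible_reduce: "T2_irreducible s \<Longrightarrow> T2_irreducible (reduce s w)"
  by (induction w arbitrary: s) (simp_all add: T2_irreducible_push)

lemma T2_irreducible_nf: "T2_irreducible (nf w)"
  unfolding nf_def by (simp add: T2_irreducible_reduce T2_irreducible_Nil)

lemma reduce_square:
  assumes irr: "T2_irreducible s" and i: "1 \<le> i"
  shows "reduce s (abc i @ abc i) = s"
proof (cases "\<exists>q. s = q @ abc i")
  case True
  then obtain q where q: "s = q @ abc i" by blast
  have "\<nexists>q'. q = q' @ abc i"
    using irr i q unfolding T2_irreducible_def by (metis append.assoc append_Nil2)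
  then show ?thesis
    using q i by (simp add: reduce_append reduce_abc_cancel reduce_abc_no_cancel)
next
  case False
  then show ?thesis using i by (simp add: reduce_append reduce_abc_cancel reduce_abc_no_cancel)
qed

lemma reduce_T2_irreducible: "T2_irreducible (s @ w) \<Longrightarrow> reduce s w = s @ w"
proof (induction w arbitrary: s)
  case (Cons x w)
  have "\<nexists>p. ends_in_square (s @ [x]) p"
    using Cons.prems unfolding T2_irreducible_def ends_in_square_def
    by (metis append_Cons append_assoc self_append_conv2)
  then show ?case using Cons by (simp add: push_no_square)
qed simp

text \<open>Only a square cancellation can remove the bottom of the stack, and squares start with \<open>a\<close>.\<close>
lemma hd_if_reduce_Nil: "reduce s w = [] \<Longrightarrow> s \<noteq> [] \<Longrightarrow> hd s = a"
proof (induction w arbitrary: s)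
  case (Cons x w)
  then have IH: "push s x \<noteq> [] \<Longrightarrow> hd (push s x) = a" by simp
  show ?case
  proof (cases s x rule: push_cases)
    case append
    then show ?thesis using IH Cons.prems(2) by simp
  next
    case (cancel p)
    then obtain i where "s @ [x] = p @ abc i @ abc i" unfolding ends_in_square_def by blast
    then have "hd (s @ [x]) = a" using IH cancel(2) by (cases p) (auto simp: abc_def)
    then show ?thesis using Cons.prems(2) by simp
  qed
qed simp

lemma reduce_append_or_square_prefix:
  "reduce t w = t @ w \<or> (\<exists>w1 w2 p. w = w1 @ w2 \<and> ends_in_square (t @ w1) p)"
proof (induction w arbitrary: t)
  case (Cons x w)
  show ?case
  proof (cases t x rule: push_cases)
    case append
    from Cons.IH[of "t @ [x]"] show ?thesis
    proof
      assume "\<exists>w1 w2 p. w = w1 @ w2 \<and> ends_in_square ((t @ [x]) @ w1) p"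
      then obtain w1 w2 p where "w = w1 @ w2" "ends_in_square (t @ x # w1) p" by auto
      then have "x # w = (x # w1) @ w2 \<and> ends_in_square (t @ x # w1) p" by simp
      then show ?thesis by blast
    qed (simp add: append)
  next
    case (cancel p)
    then have "x # w = [x] @ w \<and> ends_in_square (t @ [x]) p" by simp
    then show ?thesis by blast
  qed
qed simp

lemma T2_stepI: "1 \<le> i \<Longrightarrow> (x @ abc i @ abc i @ y, x @ y) \<in> T2_step"
proof -
  assume "1 \<le> i"
  then have "(abc i @ abc i, []) \<in> T2" unfolding T2_def by blast
  then have "(x @ (abc i @ abc i) @ y, x @ [] @ y) \<in> T2_step" unfolding T2_step_def by blast
  then show ?thesis by simp
qed

lemma T2_step_context: "(x, y) \<in> T2_step \<Longrightarrow> (w @ x @ z, w @ y @ z) \<in> T2_step"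
proof -
  assume "(x, y) \<in> T2_step"
  then obtain x' y' l r where "x = x' @ l @ y'" "y = x' @ r @ y'" "(l, r) \<in> T2"
    unfolding T2_step_def by blast
  then have "w @ x @ z = (w @ x') @ l @ (y' @ z) \<and> w @ y @ z = (w @ x') @ r @ (y' @ z)
      \<and> (l, r) \<in> T2"
    by simp
  then show ?thesis unfolding T2_step_def by blast
qed

lemma nf_T2_step: "(w, w') \<in> T2_step \<Longrightarrow> nf w = nf w'"
proof -
  assume "(w, w') \<in> T2_step"
  then obtain x y l i where w: "w = x @ l @ y" "w' = x @ y" and l: "l = abc i @ abc i" "1 \<le> i"
    unfolding T2_step_def T2_def by blast
  have "reduce (nf x) l = nf x"
    using l by (simp add: reduce_square T2_irreducible_nf)
  then show ?thesis unfolding nf_def w by (simp only: reduce_append)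
qed

lemma nf_Pi2_cong: "(w, w') \<in> Pi2_cong \<Longrightarrow> nf w = nf w'"
  unfolding Pi2_cong_def
  by (induction rule: rtrancl_induct) (auto dest: nf_T2_step)

lemma Pi2_cong_sym: "(x, y) \<in> Pi2_cong \<Longrightarrow> (y, x) \<in> Pi2_cong"
proof -
  have "sym Pi2_cong" unfolding Pi2_cong_def by (intro sym_rtrancl sym_Un_converse)
  then show "(x, y) \<in> Pi2_cong \<Longrightarrow> (y, x) \<in> Pi2_cong" by (rule symD)
qed

lemma Pi2_cong_trans: "(x, y) \<in> Pi2_cong \<Longrightarrow> (y, z) \<in> Pi2_cong \<Longrightarrow> (x, z) \<in> Pi2_cong"
  unfolding Pi2_cong_def by (rule rtrancl_trans)

lemma Pi2_cong_context: "(x, y) \<in> Pi2_cong \<Longrightarrow> (w @ x @ z, w @ y @ z) \<in> Pi2_cong"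
  unfolding Pi2_cong_def
proof (induction rule: rtrancl_induct)
  case (step y y')
  then have "(w @ y @ z, w @ y' @ z) \<in> T2_step \<union> T2_step\<inverse>"
    using T2_step_context by blast
  with step.IH show ?case by (rule rtrancl_into_rtrancl)
qed simp

lemma Pi2_cong_square: "1 \<le> i \<Longrightarrow> (x @ abc i @ abc i @ y, x @ y) \<in> Pi2_cong"
  unfolding Pi2_cong_def by (intro r_into_rtrancl UnI1 T2_stepI)

lemma square_suffix_prefix_abc:
  assumes sq: "ends_in_square (t @ u) p" and "u \<noteq> []" and "hd u = a"
    and irr: "T2_irreducible u"
  shows "\<exists>i. 1 \<le> i \<and> u = abc i"
proof -
  from sq obtain i where i: "1 \<le> i" and tu: "t @ u = p @ abc i @ abc i"
    unfolding ends_in_square_def by blast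
  have not_square: "\<not> (\<exists>x. u = x @ abc i @ abc i)"
    using irr i unfolding T2_irreducible_def by (metis append_Nil2 append_assoc)
  with tu obtain x where "x @ u = abc i @ abc i"
    by (auto simp: append_eq_append_conv2)
  then have "u = abc i \<or> u = abc i @ abc i"
    using suffix_abc_abc_hd_a assms(2,3) by blast
  then show ?thesis using i not_square by blast
qed

lemma Pi2_invertible_abc_append:
  assumes i: "1 \<le> i" and inv: "Pi2_invertible (abc i @ u)"
  shows "Pi2_invertible u"
proof -
  let ?S = "abc i"
  from inv obtain v where uv: "(?S @ u @ v, []) \<in> Pi2_cong" and vu: "((v @ ?S) @ u, []) \<in> Pi2_cong"
    unfolding Pi2_invertible_def by auto
  have "(u @ v @ ?S, ?S @ ?S @ u @ v @ ?S) \<in> Pi2_cong"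
    using Pi2_cong_sym[OF Pi2_cong_square[OF i, of "[]" "u @ v @ ?S"]] by simp
  moreover have "(?S @ (?S @ u @ v) @ ?S, ?S @ [] @ ?S) \<in> Pi2_cong"
    using Pi2_cong_context[OF uv] .
  moreover have "(?S @ [] @ ?S, []) \<in> Pi2_cong"
    using Pi2_cong_square[OF i, of "[]" "[]"] by simp
  ultimately have "(u @ v @ ?S, []) \<in> Pi2_cong"
    by (metis Pi2_cong_trans append_assoc)
  with vu show ?thesis unfolding Pi2_invertible_def by blast
qed

lemma Pi2_invertible_T2_irreducible_split:
  assumes irr: "T2_irreducible u" and inv: "Pi2_invertible u" and "u \<noteq> []"
  obtains i u' where "1 \<le> i" "u = abc i @ u'"
proof -
  from inv obtain v where uv: "(u @ v, []) \<in> Pi2_cong" and vu: "(v @ u, []) \<in> Pi2_cong"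
    unfolding Pi2_invertible_def by blast
  have "reduce u v = []"
    using nf_Pi2_cong[OF uv] by (simp add: nf_def reduce_append reduce_T2_irreducible irr)
  then have hd_u: "hd u = a" using hd_if_reduce_Nil \<open>u \<noteq> []\<close> by blast
  have "reduce (nf v) u = []"
    using nf_Pi2_cong[OF vu] by (simp add: nf_def reduce_append)
  then obtain u1 u2 p where u: "u = u1 @ u2" and sq: "ends_in_square (nf v @ u1) p"
    using reduce_append_or_square_prefix[of "nf v" u] \<open>u \<noteq> []\<close> by auto
  have "u1 \<noteq> []"
    using sq T2_irreducible_nf[of v]
    unfolding ends_in_square_def T2_irreducible_def by (metis append_Nil2)
  moreover have "T2_irreducible u1" using irr u T2_irreducible_infix[of "[]" u1 u2] by simp
  ultimately obtain i where "1 \<le> i" "u1 = abc i"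
    using square_suffix_prefix_abc[OF sq] hd_u u by auto
  then show ?thesis using that u by blast
qed

theorem mainTheorem7:
  fixes u :: word
  assumes "T2_irreducible u"
    and "Pi2_invertible u"
  shows "u \<in> Lambda_star"
  using assms
proof (induction "length u" arbitrary: u rule: less_induct)
  case less
  show ?case
  proof (cases "u = []")
    case True
    then show ?thesis by (simp add: Lambda_star_Nil)
  next
    case False
    with less.prems obtain i u' where i: "1 \<le> i" and u: "u = abc i @ u'"
      by (rule Pi2_invertible_T2_irreducible_split)
    have "T2_irreducible u'" using less.prems(1) u T2_irreducible_infix[of "abc i" u' "[]"] by simp
    moreover have "Pi2_invertible u'" using less.prems(2) u Pi2_invertible_abc_append[OF i] by simp
    moreover have "length u' < length u" using u by (simp add: abc_def)
    ultimately have "u' \<in> Lambda_star" using less.hyps by blast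
    then show ?thesis using u i abc_append_Lambda_star by simp
  qed
qed

end
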